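(* Let $A$ and $B$ be $\Bbbk$-algebras admitting normalized nearly Frobenius coproducts $\Delta_A$ and $\Delta_B$. Then (1) $C=A\times B$ admits a normalized nearly Frobenius coproduct, namely the one determined by $\Delta(1_C)=\sum(a_1,0)\otimes(a_2,0)+\sum(0,b_1)\otimes(0,b_2)$ where $\Delta_A(1_A)=\sum a_1\otimes a_2$ and $\Delta_B(1_B)=\sum b_1\otimes b_2$; and (2) $D=A\otimes B$ admits a normalized nearly Frobenius coproduct, namely $\Delta_D=\tau\circ(\Delta_A\otimes\Delta_B)$, where $\tau:(A\otimes A)\otimes(B\otimes B)\to(A\otimes B)\otimes(A\otimes B)$ is the transposition $a\otimes a'\otimes b\otimes b'\mapsto a\otimes b\otimes a'\otimes b'$.
   Context: Algebras are associative and unital over a field $\Bbbk$, tensor products over $\Bbbk$, $m$ denotes multiplication. A nearly Frobenius coproduct on $A$ is a $\Bbbk$-linear map $\Delta:A\to A\otimes A$ with $\Delta\circ m=(1\otimes m)\circ(\Delta\otimes 1)=(m\otimes 1)\circ(1\otimes\Delta)$ (an $A$-bimodule morphism). It is normalized if $m\circ\Delta=\operatorname{Id}_A$. *)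

theory Defs
  imports Main "HOL.Vector_Spaces" "HOL-Library.Product_Plus"
begin

text \<open>Vector spaces over a field 'k are types of class ab_group_add with a scalar
 multiplication s satisfying vector_space s (locale of HOL.Vector_Spaces).\<close>

definition kalg :: "('k::field \<Rightarrow> 'a::ab_group_add \<Rightarrow> 'a) \<Rightarrow> ('a \<Rightarrow> 'a \<Rightarrow> 'a) \<Rightarrow> 'a \<Rightarrow> bool" where
  "kalg s m u \<longleftrightarrow> vector_space s
     \<and> (\<forall>x. Vector_Spaces.linear s s (m x)) \<and> (\<forall>y. Vector_Spaces.linear s s (\<lambda>x. m x y))
     \<and> (\<forall>x y z. m (m x y) z = m x (m y z))
     \<and> (\<forall>x. m u x = x \<and> m x u = x)"

text \<open>(sT, t) is a tensor product of the k-vector spaces (sV) and (sW):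
 t is bilinear, its image spans T, and every bilinear form V x W -> k factors through
 a Vector_Spaces.linear form on T (equivalent, given spanning, to the usual universal property).\<close>

definition is_tensor :: "('k::field \<Rightarrow> 'v::ab_group_add \<Rightarrow> 'v) \<Rightarrow> ('k \<Rightarrow> 'w::ab_group_add \<Rightarrow> 'w)
     \<Rightarrow> ('k \<Rightarrow> 't::ab_group_add \<Rightarrow> 't) \<Rightarrow> ('v \<Rightarrow> 'w \<Rightarrow> 't) \<Rightarrow> bool" where
  "is_tensor sV sW sT t \<longleftrightarrow> vector_space sV \<and> vector_space sW \<and> vector_space sT
     \<and> (\<forall>w. Vector_Spaces.linear sV sT (\<lambda>v. t v w)) \<and> (\<forall>v. Vector_Spaces.linear sW sT (t v))
     \<and> module.span sT {t v w | v w. True} = UNIV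
     \<and> (\<forall>\<phi> :: 'v \<Rightarrow> 'w \<Rightarrow> 'k.
          (\<forall>w. Vector_Spaces.linear sV (*) (\<lambda>v. \<phi> v w)) \<and> (\<forall>v. Vector_Spaces.linear sW (*) (\<phi> v))
          \<longrightarrow> (\<exists>f. Vector_Spaces.linear sT (*) f \<and> (\<forall>v w. f (t v w) = \<phi> v w)))"

definition tensor_map :: "('k::field \<Rightarrow> 't1::ab_group_add \<Rightarrow> 't1) \<Rightarrow> ('k \<Rightarrow> 't2::ab_group_add \<Rightarrow> 't2)
     \<Rightarrow> ('v1 \<Rightarrow> 'w1 \<Rightarrow> 't1) \<Rightarrow> ('v2 \<Rightarrow> 'w2 \<Rightarrow> 't2) \<Rightarrow> ('v1 \<Rightarrow> 'v2) \<Rightarrow> ('w1 \<Rightarrow> 'w2) \<Rightarrow> 't1 \<Rightarrow> 't2" where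
  "tensor_map s1 s2 t1 t2 f g =
     (THE h. Vector_Spaces.linear s1 s2 h \<and> (\<forall>a b. h (t1 a b) = t2 (f a) (g b)))"

definition tensor_mult :: "('k::field \<Rightarrow> 't::ab_group_add \<Rightarrow> 't) \<Rightarrow> ('k \<Rightarrow> 'a::ab_group_add \<Rightarrow> 'a)
     \<Rightarrow> ('a \<Rightarrow> 'a \<Rightarrow> 't) \<Rightarrow> ('a \<Rightarrow> 'a \<Rightarrow> 'a) \<Rightarrow> 't \<Rightarrow> 'a" where
  "tensor_mult sT sA t m = (THE h. Vector_Spaces.linear sT sA h \<and> (\<forall>a b. h (t a b) = m a b))"

text \<open>Nearly Frobenius coproduct: Vector_Spaces.linear and Delta o m = (1 \<otimes> m) o (Delta \<otimes> 1) = (m \<otimes> 1) o (1 \<otimes> Delta),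
 written on pure tensors a \<otimes> b (both sides are Vector_Spaces.linear on A \<otimes> A, which is spanned by pure tensors).\<close>
definition nearly_frobenius :: "('k::field \<Rightarrow> 'a::ab_group_add \<Rightarrow> 'a) \<Rightarrow> ('a \<Rightarrow> 'a \<Rightarrow> 'a)
     \<Rightarrow> ('k \<Rightarrow> 't::ab_group_add \<Rightarrow> 't) \<Rightarrow> ('a \<Rightarrow> 'a \<Rightarrow> 't) \<Rightarrow> ('a \<Rightarrow> 't) \<Rightarrow> bool" where
  "nearly_frobenius sA m sT t \<Delta> \<longleftrightarrow> Vector_Spaces.linear sA sT \<Delta>
     \<and> (\<forall>a b. \<Delta> (m a b) = tensor_map sT sT t t id (\<lambda>y. m y b) (\<Delta> a))
     \<and> (\<forall>a b. \<Delta> (m a b) = tensor_map sT sT t t (m a) id (\<Delta> b))"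

definition normalized_nearly_frobenius :: "('k::field \<Rightarrow> 'a::ab_group_add \<Rightarrow> 'a) \<Rightarrow> ('a \<Rightarrow> 'a \<Rightarrow> 'a)
     \<Rightarrow> ('k \<Rightarrow> 't::ab_group_add \<Rightarrow> 't) \<Rightarrow> ('a \<Rightarrow> 'a \<Rightarrow> 't) \<Rightarrow> ('a \<Rightarrow> 't) \<Rightarrow> bool" where
  "normalized_nearly_frobenius sA m sT t \<Delta> \<longleftrightarrow> nearly_frobenius sA m sT t \<Delta>
     \<and> (\<forall>a. tensor_mult sT sA t m (\<Delta> a) = a)"

definition prod_scale :: "('k \<Rightarrow> 'a \<Rightarrow> 'a) \<Rightarrow> ('k \<Rightarrow> 'b \<Rightarrow> 'b) \<Rightarrow> 'k \<Rightarrow> 'a \<times> 'b \<Rightarrow> 'a \<times> 'b" where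
  "prod_scale sA sB c p = (sA c (fst p), sB c (snd p))"

definition prod_mult :: "('a \<Rightarrow> 'a \<Rightarrow> 'a) \<Rightarrow> ('b \<Rightarrow> 'b \<Rightarrow> 'b) \<Rightarrow> 'a \<times> 'b \<Rightarrow> 'a \<times> 'b \<Rightarrow> 'a \<times> 'b" where
  "prod_mult mA mB p q = (mA (fst p) (fst q), mB (snd p) (snd q))"

definition tensor_transpose :: "('k::field \<Rightarrow> 'p::ab_group_add \<Rightarrow> 'p) \<Rightarrow> ('k \<Rightarrow> 'dd::ab_group_add \<Rightarrow> 'dd)
     \<Rightarrow> ('aa \<Rightarrow> 'bb \<Rightarrow> 'p) \<Rightarrow> ('a \<Rightarrow> 'a \<Rightarrow> 'aa) \<Rightarrow> ('b \<Rightarrow> 'b \<Rightarrow> 'bb) \<Rightarrow> ('a \<Rightarrow> 'b \<Rightarrow> 'd)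
     \<Rightarrow> ('d \<Rightarrow> 'd \<Rightarrow> 'dd) \<Rightarrow> 'p \<Rightarrow> 'dd" where
  "tensor_transpose sP sDD tP tA tB tD tDD =
     (THE h. Vector_Spaces.linear sP sDD h \<and>
        (\<forall>a a' b b'. h (tP (tA a a') (tB b b')) = tDD (tD a b) (tD a' b')))"

end

(* Both coproducts are assembled from Delta_A and Delta_B using functoriality of the tensor
   product. For A x B, the inclusions a |-> (a,0) and b |-> (0,b) are multiplicative and
   intertwine multiplication by a' (resp. b') with multiplication by (a',b'), so the two bimodule
   identities and m o Delta = id transfer summand by summand. For A (x) B, the transposition tau
   is natural for tensor products of linear maps, so on pure tensors a (x) b the identities for
   tau o (Delta_A (x) Delta_B) reduce factorwise to those of Delta_A and Delta_B; since all maps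
   involved are (bi)linear and pure tensors span, this suffices. *)

theory Submission
  imports Defs
begin

section \<open>Linear maps\<close>

lemma vector_space_mult: "vector_space ((*) :: 'k::field \<Rightarrow> 'k \<Rightarrow> 'k)"
  unfolding vector_space_def by (auto simp: algebra_simps)

lemma linear_add: "Vector_Spaces.linear s1 s2 f \<Longrightarrow> f (x + y) = f x + f y"
  by (simp add: linear_iff)

lemma linear_scale: "Vector_Spaces.linear s1 s2 f \<Longrightarrow> f (s1 c x) = s2 c (f x)"
  by (simp add: linear_iff)

lemma linear_0: "Vector_Spaces.linear s1 s2 f \<Longrightarrow> f 0 = 0"
  by (metis add_cancel_right_right linear_add)

lemma linear_diff: "Vector_Spaces.linear s1 s2 f \<Longrightarrow> f (x - y) = f x - f y"
  by (metis add_diff_cancel diff_add_cancel linear_add)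

lemma linear_vector_spaces:
  assumes "Vector_Spaces.linear s1 s2 f"
  shows "vector_space s1" and "vector_space s2"
  using assms by (simp_all add: linear_iff)

lemma linearI:
  assumes "vector_space s1" and "vector_space s2"
    and "\<And>x y. f (x + y) = f x + f y" and "\<And>c x. f (s1 c x) = s2 c (f x)"
  shows "Vector_Spaces.linear s1 s2 f"
  using assms by (simp add: linear_iff)

lemma linear_compose_apply:
  "Vector_Spaces.linear s1 s2 f \<Longrightarrow> Vector_Spaces.linear s2 s3 g
    \<Longrightarrow> Vector_Spaces.linear s1 s3 (\<lambda>x. g (f x))"
  using Vector_Spaces.linear_compose[of s1 s2 f s3 g] by (simp add: o_def)

lemma linear_compose_add:
  "Vector_Spaces.linear s1 s2 f \<Longrightarrow> Vector_Spaces.linear s1 s2 g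
    \<Longrightarrow> Vector_Spaces.linear s1 s2 (\<lambda>x. f x + g x)"
  by (auto simp: linear_iff vector_space_def ac_simps)

lemma linear_compose_scale_right:
  "Vector_Spaces.linear s1 s2 f \<Longrightarrow> Vector_Spaces.linear s1 s2 (\<lambda>x. s2 c (f x))"
  by (auto simp: linear_iff vector_space_def mult.commute)

lemma eq_if_functionals_agree:
  assumes "vector_space s" and "\<And>l. Vector_Spaces.linear s (*) l \<Longrightarrow> l x = l y"
  shows "x = y"
proof (rule ccontr)
  assume "x \<noteq> y"
  interpret vector_space_pair s "(*)"
    using assms(1) vector_space_mult by (simp add: vector_space_pair_def)
  have "vs1.independent {x - y}" using \<open>x \<noteq> y\<close> by simp
  from linear_independent_extend[OF this, of "\<lambda>_. 1"] obtain l where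
    l: "Vector_Spaces.linear s (*) l" and "l (x - y) = 1" by auto
  moreover have "l x = l y" using assms(2)[OF l] .
  ultimately show False by (simp add: linear_diff)
qed

lemma linear_eq_on_spanning:
  assumes f: "Vector_Spaces.linear s1 s2 f" and g: "Vector_Spaces.linear s1 s2 g"
    and span: "module.span s1 G = UNIV" and eq: "\<And>x. x \<in> G \<Longrightarrow> f x = g x"
  shows "f = g"
proof
  fix x
  interpret vector_space_pair s1 s2
    using linear_vector_spaces[OF f] by (simp add: vector_space_pair_def)
  show "f x = g x" using linear_eq_on[OF f g, of x G] span eq by blast
qed

lemma bilinear_eq_on_spanning:
  assumes span1: "module.span s1 G1 = UNIV" and span2: "module.span s2 G2 = UNIV"
    and p: "\<And>y. Vector_Spaces.linear s1 sX (\<lambda>x. p x y)" "\<And>x. Vector_Spaces.linear s2 sX (p x)"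
    and q: "\<And>y. Vector_Spaces.linear s1 sX (\<lambda>x. q x y)" "\<And>x. Vector_Spaces.linear s2 sX (q x)"
    and eq: "\<And>x y. x \<in> G1 \<Longrightarrow> y \<in> G2 \<Longrightarrow> p x y = q x y"
  shows "p x y = q x y"
proof -
  have "(\<lambda>x. p x y) = (\<lambda>x. q x y)" if "y \<in> G2" for y
    by (rule linear_eq_on_spanning[OF p(1) q(1) span1]) (use eq that in auto)
  then have "p x = q x"
    by (intro linear_eq_on_spanning[OF p(2) q(2) span2]) meson
  then show ?thesis by simp
qed

lemma vector_space_prod_scale:
  "vector_space sA \<Longrightarrow> vector_space sB \<Longrightarrow> vector_space (prod_scale sA sB)"
  by (simp add: vector_space_def prod_scale_def)

lemma
  assumes A: "vector_space sA" and B: "vector_space sB"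
  shows linear_prod_inl: "Vector_Spaces.linear sA (prod_scale sA sB) (\<lambda>a. (a, 0))"
    and linear_prod_inr: "Vector_Spaces.linear sB (prod_scale sA sB) (\<lambda>b. (0, b))"
    and linear_prod_fst: "Vector_Spaces.linear (prod_scale sA sB) sA fst"
    and linear_prod_snd: "Vector_Spaces.linear (prod_scale sA sB) sB snd"
proof -
  interpret A: vector_space sA by (fact A)
  interpret B: vector_space sB by (fact B)
  note AB = vector_space_prod_scale[OF A B]
  show "Vector_Spaces.linear sA (prod_scale sA sB) (\<lambda>a. (a, 0))"
    by (rule linearI[OF A AB]) (simp_all add: prod_scale_def)
  show "Vector_Spaces.linear sB (prod_scale sA sB) (\<lambda>b. (0, b))"
    by (rule linearI[OF B AB]) (simp_all add: prod_scale_def)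
  show "Vector_Spaces.linear (prod_scale sA sB) sA fst"
    by (rule linearI[OF AB A]) (simp_all add: prod_scale_def)
  show "Vector_Spaces.linear (prod_scale sA sB) sB snd"
    by (rule linearI[OF AB B]) (simp_all add: prod_scale_def)
qed

lemma linear_prod_mult_left:
  assumes "\<And>y. Vector_Spaces.linear sA sA (\<lambda>x. mA x y)" and "\<And>y. Vector_Spaces.linear sB sB (\<lambda>x. mB x y)"
  shows "Vector_Spaces.linear (prod_scale sA sB) (prod_scale sA sB) (\<lambda>p. prod_mult mA mB p q)"
proof -
  note vs = vector_space_prod_scale[OF linear_vector_spaces(1)[OF assms(1)]
      linear_vector_spaces(1)[OF assms(2)]]
  show ?thesis
    by (rule linearI[OF vs vs])
      (simp_all add: prod_mult_def prod_scale_def linear_add[OF assms(1)] linear_add[OF assms(2)]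
        linear_scale[OF assms(1)] linear_scale[OF assms(2)])
qed

lemma linear_prod_mult_right:
  assumes "\<And>x. Vector_Spaces.linear sA sA (mA x)" and "\<And>x. Vector_Spaces.linear sB sB (mB x)"
  shows "Vector_Spaces.linear (prod_scale sA sB) (prod_scale sA sB) (prod_mult mA mB p)"
proof -
  note vs = vector_space_prod_scale[OF linear_vector_spaces(1)[OF assms(1)]
      linear_vector_spaces(1)[OF assms(2)]]
  show ?thesis
    by (rule linearI[OF vs vs])
      (simp_all add: prod_mult_def prod_scale_def linear_add[OF assms(1)] linear_add[OF assms(2)]
        linear_scale[OF assms(1)] linear_scale[OF assms(2)])
qed

section \<open>Tensor products\<close>

lemma is_tensor_vector_spaces:
  assumes "is_tensor sV sW sT t"
  shows "vector_space sV" and "vector_space sW" and "vector_space sT"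
  using assms by (simp_all add: is_tensor_def)

lemma is_tensor_linear_left: "is_tensor sV sW sT t \<Longrightarrow> Vector_Spaces.linear sV sT (\<lambda>v. t v w)"
  by (simp add: is_tensor_def)

lemma is_tensor_linear_right: "is_tensor sV sW sT t \<Longrightarrow> Vector_Spaces.linear sW sT (t v)"
  by (simp add: is_tensor_def)

lemma is_tensor_span: "is_tensor sV sW sT t \<Longrightarrow> module.span sT {t v w |v w. True} = UNIV"
  by (simp add: is_tensor_def)

lemma is_tensor_linear_eq:
  assumes "is_tensor sV sW sT t"
    and "Vector_Spaces.linear sT sX h1" and "Vector_Spaces.linear sT sX h2"
    and "\<And>v w. h1 (t v w) = h2 (t v w)"
  shows "h1 = h2"
  using assms by (intro linear_eq_on_spanning[OF assms(2,3) is_tensor_span]) auto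

lemma is_tensor_universal_scalar:
  assumes "is_tensor sV sW sT t"
    and "\<And>w. Vector_Spaces.linear sV (*) (\<lambda>v. \<phi> v w)" "\<And>v. Vector_Spaces.linear sW (*) (\<phi> v)"
  shows "\<exists>f. Vector_Spaces.linear sT (*) f \<and> (\<forall>v w. f (t v w) = \<phi> v w)"
  using assms unfolding is_tensor_def by blast

text \<open>The definition of a tensor product only demands the universal property for bilinear
  forms; it extends to bilinear maps into any vector space X because the functionals on X
  separate points.\<close>

lemma is_tensor_universal:
  fixes sT :: "'k::field \<Rightarrow> 't::ab_group_add \<Rightarrow> 't"
  assumes T: "is_tensor sV sW sT t" and X: "vector_space sX"
    and \<phi>: "\<And>w. Vector_Spaces.linear sV sX (\<lambda>v. \<phi> v w)" "\<And>v. Vector_Spaces.linear sW sX (\<phi> v)"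
  shows "\<exists>h. Vector_Spaces.linear sT sX h \<and> (\<forall>v w. h (t v w) = \<phi> v w)"
proof -
  let ?G = "{t v w |v w. True}"
  interpret T: vector_space sT using is_tensor_vector_spaces(3)[OF T] .
  interpret vector_space_pair sT sX
    using T.vector_space_axioms X by (simp add: vector_space_pair_def)
  obtain B where B: "B \<subseteq> ?G" "T.independent B" "?G \<subseteq> T.span B"
    by (rule T.maximal_independent_subset)
  have span_B: "T.span B = UNIV"
    using is_tensor_span[OF T] T.span_minimal[OF B(3) T.subspace_span] by auto
  have "\<exists>p. b = t (fst p) (snd p)" if "b \<in> B" for b
  proof -
    obtain v w where "b = t v w" using B(1) \<open>b \<in> B\<close> by blast
    then show ?thesis by (intro exI[of _ "(v, w)"]) simp
  qed
  then obtain pk where pk: "\<And>b. b \<in> B \<Longrightarrow> b = t (fst (pk b)) (snd (pk b))"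
    by metis
  obtain h where h: "Vector_Spaces.linear sT sX h"
      "\<And>b. b \<in> B \<Longrightarrow> h b = \<phi> (fst (pk b)) (snd (pk b))"
    using linear_independent_extend[OF B(2), of "\<lambda>b. \<phi> (fst (pk b)) (snd (pk b))"] by blast
  have "h (t v w) = \<phi> v w" for v w
  proof (rule eq_if_functionals_agree[OF X])
    fix l assume l: "Vector_Spaces.linear sX (*) l"
    obtain f where f: "Vector_Spaces.linear sT (*) f" "\<And>v w. f (t v w) = l (\<phi> v w)"
      using is_tensor_universal_scalar[OF T linear_compose_apply[OF \<phi>(1) l]
          linear_compose_apply[OF \<phi>(2) l]] by blast
    have "f = (\<lambda>x. l (h x))"
    proof (rule linear_eq_on_spanning[OF f(1) linear_compose_apply[OF h(1) l] span_B])
      fix b assume b: "b \<in> B"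
      have "f b = f (t (fst (pk b)) (snd (pk b)))" using pk[OF b] by (rule arg_cong)
      also have "\<dots> = l (h b)" by (simp add: f(2) h(2)[OF b])
      finally show "f b = l (h b)" .
    qed
    then show "l (h (t v w)) = l (\<phi> v w)" using f(2) by metis
  qed
  with h(1) show ?thesis by blast
qed

definition tensor_lift :: "('k::field \<Rightarrow> 't::ab_group_add \<Rightarrow> 't) \<Rightarrow> ('k \<Rightarrow> 'x::ab_group_add \<Rightarrow> 'x)
     \<Rightarrow> ('v \<Rightarrow> 'w \<Rightarrow> 't) \<Rightarrow> ('v \<Rightarrow> 'w \<Rightarrow> 'x) \<Rightarrow> 't \<Rightarrow> 'x" where
  "tensor_lift sT sX t \<phi> = (THE h. Vector_Spaces.linear sT sX h \<and> (\<forall>v w. h (t v w) = \<phi> v w))"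

lemma
  assumes T: "is_tensor sV sW sT t" and X: "vector_space sX"
    and \<phi>: "\<And>w. Vector_Spaces.linear sV sX (\<lambda>v. \<phi> v w)" "\<And>v. Vector_Spaces.linear sW sX (\<phi> v)"
  shows linear_tensor_lift: "Vector_Spaces.linear sT sX (tensor_lift sT sX t \<phi>)"
    and tensor_lift_tensor: "tensor_lift sT sX t \<phi> (t v w) = \<phi> v w"
proof -
  obtain h where h: "Vector_Spaces.linear sT sX h" "\<forall>v w. h (t v w) = \<phi> v w"
    using is_tensor_universal[OF T X \<phi>] by blast
  have "\<exists>!h. Vector_Spaces.linear sT sX h \<and> (\<forall>v w. h (t v w) = \<phi> v w)"
  proof (rule ex1I[of _ h])
    fix g assume "Vector_Spaces.linear sT sX g \<and> (\<forall>v w. g (t v w) = \<phi> v w)"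
    then show "g = h" using h(2) by (intro is_tensor_linear_eq[OF T _ h(1)]) auto
  qed (use h in blast)
  from theI'[OF this] show "Vector_Spaces.linear sT sX (tensor_lift sT sX t \<phi>)"
    and "tensor_lift sT sX t \<phi> (t v w) = \<phi> v w"
    unfolding tensor_lift_def by auto
qed

lemma linear_tensor_lift_param:
  assumes T: "is_tensor sV sW sT t" and X: "vector_space sX"
    and \<phi>: "\<And>y w. Vector_Spaces.linear sV sX (\<lambda>v. \<phi> y v w)" "\<And>y v. Vector_Spaces.linear sW sX (\<phi> y v)"
    and param: "\<And>v w. Vector_Spaces.linear sY sX (\<lambda>y. \<phi> y v w)"
  shows "Vector_Spaces.linear sY sX (\<lambda>y. tensor_lift sT sX t (\<phi> y) z)"
proof -
  note lift = linear_tensor_lift[OF T X \<phi>] tensor_lift_tensor[OF T X \<phi>]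
  have "tensor_lift sT sX t (\<phi> (y1 + y2))
      = (\<lambda>z. tensor_lift sT sX t (\<phi> y1) z + tensor_lift sT sX t (\<phi> y2) z)" for y1 y2
    by (rule is_tensor_linear_eq[OF T lift(1) linear_compose_add[OF lift(1) lift(1)]])
      (simp add: lift(2) linear_add[OF param])
  moreover have "tensor_lift sT sX t (\<phi> (sY c y))
      = (\<lambda>z. sX c (tensor_lift sT sX t (\<phi> y) z))" for c y
    by (rule is_tensor_linear_eq[OF T lift(1) linear_compose_scale_right[OF lift(1)]])
      (simp add: lift(2) linear_scale[OF param])
  ultimately show ?thesis
    by (intro linearI[OF linear_vector_spaces(1)[OF param] X]) simp_all
qed

lemma tensor_map_eq_tensor_lift:
  "tensor_map s1 s2 t1 t2 f g = tensor_lift s1 s2 t1 (\<lambda>a b. t2 (f a) (g b))"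
  by (simp add: tensor_map_def tensor_lift_def)

lemma tensor_mult_eq_tensor_lift: "tensor_mult sT sA t m = tensor_lift sT sA t m"
  by (simp add: tensor_mult_def tensor_lift_def)

lemma
  assumes T1: "is_tensor sV1 sW1 s1 t1" and T2: "is_tensor sV2 sW2 s2 t2"
    and f: "Vector_Spaces.linear sV1 sV2 f" and g: "Vector_Spaces.linear sW1 sW2 g"
  shows linear_tensor_map: "Vector_Spaces.linear s1 s2 (tensor_map s1 s2 t1 t2 f g)"
    and tensor_map_tensor: "tensor_map s1 s2 t1 t2 f g (t1 a b) = t2 (f a) (g b)"
  using linear_tensor_lift[OF T1 is_tensor_vector_spaces(3)[OF T2]]
    tensor_lift_tensor[OF T1 is_tensor_vector_spaces(3)[OF T2]]
    linear_compose_apply[OF f is_tensor_linear_left[OF T2]]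
    linear_compose_apply[OF g is_tensor_linear_right[OF T2]]
  by (simp_all add: tensor_map_eq_tensor_lift)

lemma
  assumes T: "is_tensor sA sA sT t"
    and m: "\<And>y. Vector_Spaces.linear sA sA (\<lambda>x. m x y)" "\<And>x. Vector_Spaces.linear sA sA (m x)"
  shows linear_tensor_mult: "Vector_Spaces.linear sT sA (tensor_mult sT sA t m)"
    and tensor_mult_tensor: "tensor_mult sT sA t m (t a b) = m a b"
  using linear_tensor_lift[OF T _ m] tensor_lift_tensor[OF T _ m] linear_vector_spaces(1)[OF m(2)]
  by (simp_all add: tensor_mult_eq_tensor_lift)

lemma tensor_map_compose:
  assumes T1: "is_tensor sU1 sV1 s1 t1" and T2: "is_tensor sU2 sV2 s2 t2"
    and T3: "is_tensor sU3 sV3 s3 t3"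
    and f: "Vector_Spaces.linear sU1 sU2 f1" "Vector_Spaces.linear sV1 sV2 f2"
    and g: "Vector_Spaces.linear sU2 sU3 g1" "Vector_Spaces.linear sV2 sV3 g2"
  shows "tensor_map s2 s3 t2 t3 g1 g2 (tensor_map s1 s2 t1 t2 f1 f2 x)
    = tensor_map s1 s3 t1 t3 (\<lambda>a. g1 (f1 a)) (\<lambda>b. g2 (f2 b)) x"
proof -
  note gf = linear_compose_apply[OF f(1) g(1)] linear_compose_apply[OF f(2) g(2)]
  have "(\<lambda>x. tensor_map s2 s3 t2 t3 g1 g2 (tensor_map s1 s2 t1 t2 f1 f2 x))
    = tensor_map s1 s3 t1 t3 (\<lambda>a. g1 (f1 a)) (\<lambda>b. g2 (f2 b))"
    by (rule is_tensor_linear_eq[OF T1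
          linear_compose_apply[OF linear_tensor_map[OF T1 T2 f] linear_tensor_map[OF T2 T3 g]]
          linear_tensor_map[OF T1 T3 gf]])
      (simp add: tensor_map_tensor[OF T1 T2 f] tensor_map_tensor[OF T2 T3 g]
        tensor_map_tensor[OF T1 T3 gf])
  then show ?thesis by (rule fun_cong)
qed

lemma tensor_mult_tensor_map:
  assumes T1: "is_tensor sA sA s1 t1" and T2: "is_tensor sB sB s2 t2"
    and m1: "\<And>y. Vector_Spaces.linear sA sA (\<lambda>x. m1 x y)" "\<And>x. Vector_Spaces.linear sA sA (m1 x)"
    and m2: "\<And>y. Vector_Spaces.linear sB sB (\<lambda>x. m2 x y)" "\<And>x. Vector_Spaces.linear sB sB (m2 x)"
    and f: "Vector_Spaces.linear sA sB f" and hom: "\<And>x y. f (m1 x y) = m2 (f x) (f y)"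
  shows "tensor_mult s2 sB t2 m2 (tensor_map s1 s2 t1 t2 f f u) = f (tensor_mult s1 sA t1 m1 u)"
proof -
  have "(\<lambda>u. tensor_mult s2 sB t2 m2 (tensor_map s1 s2 t1 t2 f f u))
    = (\<lambda>u. f (tensor_mult s1 sA t1 m1 u))"
    by (rule is_tensor_linear_eq[OF T1
          linear_compose_apply[OF linear_tensor_map[OF T1 T2 f f] linear_tensor_mult[OF T2 m2]]
          linear_compose_apply[OF linear_tensor_mult[OF T1 m1] f]])
      (simp add: tensor_map_tensor[OF T1 T2 f f] tensor_mult_tensor[OF T1 m1]
        tensor_mult_tensor[OF T2 m2] hom)
  then show ?thesis by (rule fun_cong)
qed

lemma linear_tensor_map_param:
  assumes T1: "is_tensor sV1 sW1 s1 t1" and T2: "is_tensor sV2 sW2 s2 t2"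
    and F: "\<And>y. Vector_Spaces.linear sV1 sV2 (F y)" and G: "\<And>y. Vector_Spaces.linear sW1 sW2 (G y)"
    and param: "\<And>a b. Vector_Spaces.linear sY s2 (\<lambda>y. t2 (F y a) (G y b))"
  shows "Vector_Spaces.linear sY s2 (\<lambda>y. tensor_map s1 s2 t1 t2 (F y) (G y) z)"
  unfolding tensor_map_eq_tensor_lift
  by (rule linear_tensor_lift_param[OF T1 is_tensor_vector_spaces(3)[OF T2] _ _ param])
    (simp_all add: linear_compose_apply[OF F is_tensor_linear_left[OF T2]]
      linear_compose_apply[OF G is_tensor_linear_right[OF T2]])

lemma is_tensor_tensor_universal:
  fixes sP :: "'k::field \<Rightarrow> 'p::ab_group_add \<Rightarrow> 'p"
  assumes T1: "is_tensor sV1 sW1 sT1 t1" and T2: "is_tensor sV2 sW2 sT2 t2"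
    and P: "is_tensor sT1 sT2 sP tP" and X: "vector_space sX"
    and \<Phi>: "\<And>a' b b'. Vector_Spaces.linear sV1 sX (\<lambda>a. \<Phi> a a' b b')"
      "\<And>a b b'. Vector_Spaces.linear sW1 sX (\<lambda>a'. \<Phi> a a' b b')"
      "\<And>a a' b'. Vector_Spaces.linear sV2 sX (\<lambda>b. \<Phi> a a' b b')"
      "\<And>a a' b. Vector_Spaces.linear sW2 sX (\<lambda>b'. \<Phi> a a' b b')"
  shows "\<exists>h. Vector_Spaces.linear sP sX h \<and> (\<forall>a a' b b'. h (tP (t1 a a') (t2 b b')) = \<Phi> a a' b b')"
proof -
  define g where "g a a' = tensor_lift sT2 sX t2 (\<Phi> a a')" for a a'
  have g: "Vector_Spaces.linear sT2 sX (g a a')" "g a a' (t2 b b') = \<Phi> a a' b b'" for a a' b b'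
    unfolding g_def by (rule linear_tensor_lift[OF T2 X \<Phi>(3,4)] tensor_lift_tensor[OF T2 X \<Phi>(3,4)])+
  have g_left: "Vector_Spaces.linear sV1 sX (\<lambda>a. g a a' w)"
    and g_right: "Vector_Spaces.linear sW1 sX (\<lambda>a'. g a a' w)" for a a' w
    unfolding g_def by (rule linear_tensor_lift_param[OF T2 X]; rule \<Phi>)+
  define k where "k w = tensor_lift sT1 sX t1 (\<lambda>a a'. g a a' w)" for w
  have k: "Vector_Spaces.linear sT1 sX (k w)" "k w (t1 a a') = g a a' w" for w a a'
    unfolding k_def
    by (rule linear_tensor_lift[OF T1 X g_left g_right] tensor_lift_tensor[OF T1 X g_left g_right])+
  have k_param: "Vector_Spaces.linear sT2 sX (\<lambda>w. k w u)" for u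
    unfolding k_def by (rule linear_tensor_lift_param[OF T1 X g_left g_right g(1)])
  show ?thesis
    using linear_tensor_lift[OF P X k(1) k_param] tensor_lift_tensor[OF P X k(1) k_param]
    by (auto simp: k(2) g(2))
qed

lemma is_tensor_tensor_linear_eq:
  assumes T1: "is_tensor sV1 sW1 sT1 t1" and T2: "is_tensor sV2 sW2 sT2 t2"
    and P: "is_tensor sT1 sT2 sP tP"
    and h1: "Vector_Spaces.linear sP sX h1" and h2: "Vector_Spaces.linear sP sX h2"
    and eq: "\<And>a a' b b'. h1 (tP (t1 a a') (t2 b b')) = h2 (tP (t1 a a') (t2 b b'))"
  shows "h1 = h2"
proof (rule is_tensor_linear_eq[OF P h1 h2])
  fix u w
  show "h1 (tP u w) = h2 (tP u w)"
    by (rule bilinear_eq_on_spanning[OF is_tensor_span[OF T1] is_tensor_span[OF T2],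
          where p="\<lambda>u w. h1 (tP u w)" and q="\<lambda>u w. h2 (tP u w)"])
      (auto intro: linear_compose_apply[OF is_tensor_linear_left[OF P]]
        linear_compose_apply[OF is_tensor_linear_right[OF P]] h1 h2 simp: eq)
qed

lemma
  assumes TA: "is_tensor sA sA sAA tA" and TB: "is_tensor sB sB sBB tB"
    and P: "is_tensor sAA sBB sP tP" and D: "is_tensor sA sB sD tD"
    and DD: "is_tensor sD sD sDD tDD"
  shows linear_tensor_transpose: "Vector_Spaces.linear sP sDD (tensor_transpose sP sDD tP tA tB tD tDD)"
    and tensor_transpose_tensor:
      "tensor_transpose sP sDD tP tA tB tD tDD (tP (tA a a') (tB b b')) = tDD (tD a b) (tD a' b')"
proof -
  let ?spec = "\<lambda>h. Vector_Spaces.linear sP sDD h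
    \<and> (\<forall>a a' b b'. h (tP (tA a a') (tB b b')) = tDD (tD a b) (tD a' b'))"
  obtain h where h: "?spec h"
    using is_tensor_tensor_universal[OF TA TB P is_tensor_vector_spaces(3)[OF DD],
        where \<Phi>="\<lambda>a a' b b'. tDD (tD a b) (tD a' b')", OF
      linear_compose_apply[OF is_tensor_linear_left[OF D] is_tensor_linear_left[OF DD]]
      linear_compose_apply[OF is_tensor_linear_left[OF D] is_tensor_linear_right[OF DD]]
      linear_compose_apply[OF is_tensor_linear_right[OF D] is_tensor_linear_left[OF DD]]
      linear_compose_apply[OF is_tensor_linear_right[OF D] is_tensor_linear_right[OF DD]]]
    by blast
  have "\<exists>!h. ?spec h"
  proof (rule ex1I[of _ h])
    fix g assume "?spec g"
    then show "g = h" using h by (intro is_tensor_tensor_linear_eq[OF TA TB P]) auto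
  qed (fact h)
  from theI'[OF this] show "Vector_Spaces.linear sP sDD (tensor_transpose sP sDD tP tA tB tD tDD)"
    and "tensor_transpose sP sDD tP tA tB tD tDD (tP (tA a a') (tB b b')) = tDD (tD a b) (tD a' b')"
    unfolding tensor_transpose_def by auto
qed

lemma tensor_transpose_tensor_map:
  assumes TA: "is_tensor sA sA sAA tA" and TB: "is_tensor sB sB sBB tB"
    and P: "is_tensor sAA sBB sP tP" and D: "is_tensor sA sB sD tD"
    and DD: "is_tensor sD sD sDD tDD"
    and f: "Vector_Spaces.linear sA sA f1" "Vector_Spaces.linear sA sA f2"
    and g: "Vector_Spaces.linear sB sB g1" "Vector_Spaces.linear sB sB g2"
    and h: "Vector_Spaces.linear sD sD h1" "Vector_Spaces.linear sD sD h2"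
    and h_tensor: "\<And>a b. h1 (tD a b) = tD (f1 a) (g1 b)" "\<And>a b. h2 (tD a b) = tD (f2 a) (g2 b)"
  shows "tensor_transpose sP sDD tP tA tB tD tDD
      (tP (tensor_map sAA sAA tA tA f1 f2 u) (tensor_map sBB sBB tB tB g1 g2 v))
    = tensor_map sDD sDD tDD tDD h1 h2 (tensor_transpose sP sDD tP tA tB tD tDD (tP u v))"
proof -
  let ?\<tau> = "tensor_transpose sP sDD tP tA tB tD tDD"
  note \<tau> = linear_tensor_transpose[OF TA TB P D DD] tensor_transpose_tensor[OF TA TB P D DD]
  note F = linear_tensor_map[OF TA TA f] and G = linear_tensor_map[OF TB TB g]
    and H = linear_tensor_map[OF DD DD h]
  show ?thesis
  proof (rule bilinear_eq_on_spanning[OF is_tensor_span[OF TA] is_tensor_span[OF TB],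
        where p="\<lambda>u v. ?\<tau> (tP (tensor_map sAA sAA tA tA f1 f2 u) (tensor_map sBB sBB tB tB g1 g2 v))"
        and q="\<lambda>u v. tensor_map sDD sDD tDD tDD h1 h2 (?\<tau> (tP u v))"])
    show "Vector_Spaces.linear sAA sDD
        (\<lambda>u. ?\<tau> (tP (tensor_map sAA sAA tA tA f1 f2 u) (tensor_map sBB sBB tB tB g1 g2 v)))" for v
      by (rule linear_compose_apply[OF F linear_compose_apply[OF is_tensor_linear_left[OF P] \<tau>(1)]])
    show "Vector_Spaces.linear sBB sDD
        (\<lambda>v. ?\<tau> (tP (tensor_map sAA sAA tA tA f1 f2 u) (tensor_map sBB sBB tB tB g1 g2 v)))" for u
      by (rule linear_compose_apply[OF G linear_compose_apply[OF is_tensor_linear_right[OF P] \<tau>(1)]])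
    show "Vector_Spaces.linear sAA sDD (\<lambda>u. tensor_map sDD sDD tDD tDD h1 h2 (?\<tau> (tP u v)))" for v
      by (rule linear_compose_apply[OF linear_compose_apply[OF is_tensor_linear_left[OF P] \<tau>(1)] H])
    show "Vector_Spaces.linear sBB sDD (\<lambda>v. tensor_map sDD sDD tDD tDD h1 h2 (?\<tau> (tP u v)))" for u
      by (rule linear_compose_apply[OF linear_compose_apply[OF is_tensor_linear_right[OF P] \<tau>(1)] H])
  qed (auto simp: tensor_map_tensor[OF TA TA f] tensor_map_tensor[OF TB TB g]
      tensor_map_tensor[OF DD DD h] \<tau>(2) h_tensor)
qed

section \<open>Nearly Frobenius coproducts\<close>

lemma kalg_linear_left: "kalg s m u \<Longrightarrow> Vector_Spaces.linear s s (\<lambda>x. m x y)"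
  by (simp add: kalg_def)

lemma kalg_linear_right: "kalg s m u \<Longrightarrow> Vector_Spaces.linear s s (m x)"
  by (simp add: kalg_def)

lemma
  assumes "normalized_nearly_frobenius sA m sT t \<Delta>"
  shows normalized_nearly_frobenius_linear: "Vector_Spaces.linear sA sT \<Delta>"
    and normalized_nearly_frobenius_right: "\<Delta> (m a b) = tensor_map sT sT t t id (\<lambda>y. m y b) (\<Delta> a)"
    and normalized_nearly_frobenius_left: "\<Delta> (m a b) = tensor_map sT sT t t (m a) id (\<Delta> b)"
    and normalized_nearly_frobenius_counit: "tensor_mult sT sA t m (\<Delta> a) = a"
  using assms unfolding normalized_nearly_frobenius_def nearly_frobenius_def by blast+

lemma tensor_map_commute:
  assumes T1: "is_tensor sV1 sV1 s1 t1" and T2: "is_tensor sV2 sV2 s2 t2"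
    and f: "Vector_Spaces.linear sV1 sV2 f"
    and g: "Vector_Spaces.linear sV1 sV1 g1" "Vector_Spaces.linear sV1 sV1 g2"
    and h: "Vector_Spaces.linear sV2 sV2 h1" "Vector_Spaces.linear sV2 sV2 h2"
    and commute: "\<And>x. f (g1 x) = h1 (f x)" "\<And>x. f (g2 x) = h2 (f x)"
  shows "tensor_map s1 s2 t1 t2 f f (tensor_map s1 s1 t1 t1 g1 g2 u)
    = tensor_map s2 s2 t2 t2 h1 h2 (tensor_map s1 s2 t1 t2 f f u)"
  using tensor_map_compose[OF T1 T1 T2 g f f] tensor_map_compose[OF T1 T2 T2 f f h]
  by (simp add: commute)

lemma nearly_frobenius_if_pure_tensors:
  assumes D: "is_tensor sV sW sD tD" and DD: "is_tensor sD sD sDD tDD"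
    and m: "\<And>y. Vector_Spaces.linear sD sD (\<lambda>x. m x y)" "\<And>x. Vector_Spaces.linear sD sD (m x)"
    and \<Delta>: "Vector_Spaces.linear sD sDD \<Delta>"
    and right: "\<And>a b a' b'. \<Delta> (m (tD a b) (tD a' b'))
      = tensor_map sDD sDD tDD tDD id (\<lambda>z. m z (tD a' b')) (\<Delta> (tD a b))"
    and left: "\<And>a b a' b'. \<Delta> (m (tD a b) (tD a' b'))
      = tensor_map sDD sDD tDD tDD (m (tD a b)) id (\<Delta> (tD a' b'))"
  shows "nearly_frobenius sD m sDD tDD \<Delta>"
proof -
  have id: "Vector_Spaces.linear sD sD id"
    using vector_space.linear_id[OF is_tensor_vector_spaces(3)[OF D]] .
  note span = is_tensor_span[OF D]
  have "\<Delta> (m x y) = tensor_map sDD sDD tDD tDD id (\<lambda>z. m z y) (\<Delta> x)" for x y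
  proof (rule bilinear_eq_on_spanning[OF span span, where p="\<lambda>x y. \<Delta> (m x y)"
        and q="\<lambda>x y. tensor_map sDD sDD tDD tDD id (\<lambda>z. m z y) (\<Delta> x)"])
    show "Vector_Spaces.linear sD sDD (\<lambda>y. tensor_map sDD sDD tDD tDD id (\<lambda>z. m z y) (\<Delta> x))" for x
      by (rule linear_tensor_map_param[OF DD DD, where F="\<lambda>_. id"])
        (simp_all add: id m linear_compose_apply[OF m(2) is_tensor_linear_right[OF DD]])
  qed (auto intro: linear_compose_apply[OF m(1) \<Delta>] linear_compose_apply[OF m(2) \<Delta>]
      linear_compose_apply[OF \<Delta> linear_tensor_map[OF DD DD id m(1)]] simp: right)
  moreover have "\<Delta> (m x y) = tensor_map sDD sDD tDD tDD (m x) id (\<Delta> y)" for x y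
  proof (rule bilinear_eq_on_spanning[OF span span, where p="\<lambda>x y. \<Delta> (m x y)"
        and q="\<lambda>x y. tensor_map sDD sDD tDD tDD (m x) id (\<Delta> y)"])
    show "Vector_Spaces.linear sD sDD (\<lambda>x. tensor_map sDD sDD tDD tDD (m x) id (\<Delta> y))" for y
      by (rule linear_tensor_map_param[OF DD DD, where G="\<lambda>_. id"])
        (simp_all add: id m linear_compose_apply[OF m(1) is_tensor_linear_left[OF DD]])
  qed (auto intro: linear_compose_apply[OF m(1) \<Delta>] linear_compose_apply[OF m(2) \<Delta>]
      linear_compose_apply[OF \<Delta> linear_tensor_map[OF DD DD m(2) id]] simp: left)
  ultimately show ?thesis using \<Delta> by (simp add: nearly_frobenius_def)
qed

section \<open>Products and tensor products of algebras\<close>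

locale normalized_nearly_frobenius_algebras =
  fixes sA :: "'k::field \<Rightarrow> 'a::ab_group_add \<Rightarrow> 'a" and mA :: "'a \<Rightarrow> 'a \<Rightarrow> 'a" and oneA :: 'a
    and sB :: "'k \<Rightarrow> 'b::ab_group_add \<Rightarrow> 'b" and mB :: "'b \<Rightarrow> 'b \<Rightarrow> 'b" and oneB :: 'b
    and sAA :: "'k \<Rightarrow> 'aa::ab_group_add \<Rightarrow> 'aa" and tA :: "'a \<Rightarrow> 'a \<Rightarrow> 'aa" and \<Delta>A :: "'a \<Rightarrow> 'aa"
    and sBB :: "'k \<Rightarrow> 'bb::ab_group_add \<Rightarrow> 'bb" and tB :: "'b \<Rightarrow> 'b \<Rightarrow> 'bb" and \<Delta>B :: "'b \<Rightarrow> 'bb"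
  assumes algA: "kalg sA mA oneA" and algB: "kalg sB mB oneB"
    and tensAA: "is_tensor sA sA sAA tA" and tensBB: "is_tensor sB sB sBB tB"
    and DeltaA: "normalized_nearly_frobenius sA mA sAA tA \<Delta>A"
    and DeltaB: "normalized_nearly_frobenius sB mB sBB tB \<Delta>B"
begin

lemmas mA_linear = kalg_linear_left[OF algA] kalg_linear_right[OF algA]
  and mB_linear = kalg_linear_left[OF algB] kalg_linear_right[OF algB]

lemma vector_spaces: "vector_space sA" "vector_space sB"
  using is_tensor_vector_spaces(1)[OF tensAA] is_tensor_vector_spaces(1)[OF tensBB] .

lemma linear_id: "Vector_Spaces.linear sA sA id" "Vector_Spaces.linear sB sB id"
  using vector_space.linear_id[OF vector_spaces(1)] vector_space.linear_id[OF vector_spaces(2)] .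

lemma mult_zero [simp]: "mA 0 a = 0" "mA a 0 = 0" "mB 0 b = 0" "mB b 0 = 0"
  by (rule linear_0[OF mA_linear(1)] linear_0[OF mA_linear(2)]
      linear_0[OF mB_linear(1)] linear_0[OF mB_linear(2)])+

end

locale product_nearly_frobenius = normalized_nearly_frobenius_algebras +
  fixes sCC and tC
  assumes tensCC: "is_tensor (prod_scale sA sB) (prod_scale sA sB) sCC tC"
begin

abbreviation "sC \<equiv> prod_scale sA sB"
abbreviation "mC \<equiv> prod_mult mA mB"
abbreviation "inl_tensor \<equiv> tensor_map sAA sCC tA tC (\<lambda>a. (a, 0)) (\<lambda>a. (a, 0))"
abbreviation "inr_tensor \<equiv> tensor_map sBB sCC tB tC (\<lambda>b. (0, b)) (\<lambda>b. (0, b))"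

definition prod_coproduct where
  "prod_coproduct p = inl_tensor (\<Delta>A (fst p)) + inr_tensor (\<Delta>B (snd p))"

lemma linear_inl: "Vector_Spaces.linear sA sC (\<lambda>a. (a, 0))"
  by (rule linear_prod_inl[OF vector_spaces])

lemma linear_inr: "Vector_Spaces.linear sB sC (\<lambda>b. (0, b))"
  by (rule linear_prod_inr[OF vector_spaces])

lemma linear_inl_tensor: "Vector_Spaces.linear sAA sCC inl_tensor"
  by (rule linear_tensor_map[OF tensAA tensCC linear_inl linear_inl])

lemma linear_inr_tensor: "Vector_Spaces.linear sBB sCC inr_tensor"
  by (rule linear_tensor_map[OF tensBB tensCC linear_inr linear_inr])

lemma linear_mC: "Vector_Spaces.linear sC sC (\<lambda>p. mC p q)" "Vector_Spaces.linear sC sC (mC p)"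
  by (rule linear_prod_mult_left[OF mA_linear(1) mB_linear(1)]
      linear_prod_mult_right[OF mA_linear(2) mB_linear(2)])+

lemma linear_prod_coproduct: "Vector_Spaces.linear sC sCC prod_coproduct"
proof -
  have "Vector_Spaces.linear sC sCC (\<lambda>p. inl_tensor (\<Delta>A (fst p)))"
    by (rule linear_compose_apply[OF linear_prod_fst[OF vector_spaces]
          linear_compose_apply[OF normalized_nearly_frobenius_linear[OF DeltaA] linear_inl_tensor]])
  moreover have "Vector_Spaces.linear sC sCC (\<lambda>p. inr_tensor (\<Delta>B (snd p)))"
    by (rule linear_compose_apply[OF linear_prod_snd[OF vector_spaces]
          linear_compose_apply[OF normalized_nearly_frobenius_linear[OF DeltaB] linear_inr_tensor]])
  ultimately show ?thesis unfolding prod_coproduct_def by (rule linear_compose_add)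
qed


lemma prod_coproduct_right:
  "prod_coproduct (mC p q) = tensor_map sCC sCC tC tC id (\<lambda>y. mC y q) (prod_coproduct p)"
proof -
  obtain a b a' b' where pq: "p = (a, b)" "q = (a', b')" by (cases p, cases q)
  let ?R = "tensor_map sCC sCC tC tC id (\<lambda>y. mC y q)"
  have idC: "Vector_Spaces.linear sC sC id"
    using vector_space.linear_id[OF is_tensor_vector_spaces(1)[OF tensCC]] .
  have inl: "inl_tensor (tensor_map sAA sAA tA tA id (\<lambda>y. mA y a') u) = ?R (inl_tensor u)" for u
    by (rule tensor_map_commute[OF tensAA tensCC linear_inl linear_id(1) mA_linear(1) idC linear_mC(1)])
      (simp_all add: pq prod_mult_def)
  have inr: "inr_tensor (tensor_map sBB sBB tB tB id (\<lambda>y. mB y b') u) = ?R (inr_tensor u)" for u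
    by (rule tensor_map_commute[OF tensBB tensCC linear_inr linear_id(2) mB_linear(1) idC linear_mC(1)])
      (simp_all add: pq prod_mult_def)
  have "prod_coproduct (mC p q) = inl_tensor (tensor_map sAA sAA tA tA id (\<lambda>y. mA y a') (\<Delta>A a))
      + inr_tensor (tensor_map sBB sBB tB tB id (\<lambda>y. mB y b') (\<Delta>B b))"
    by (simp add: pq prod_coproduct_def prod_mult_def normalized_nearly_frobenius_right[OF DeltaA]
        normalized_nearly_frobenius_right[OF DeltaB])
  also have "\<dots> = ?R (prod_coproduct p)"
    by (simp add: pq(1) prod_coproduct_def inl inr
        linear_add[OF linear_tensor_map[OF tensCC tensCC idC linear_mC(1)]])
  finally show ?thesis .
qed

lemma prod_coproduct_left:
  "prod_coproduct (mC p q) = tensor_map sCC sCC tC tC (mC p) id (prod_coproduct q)"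
proof -
  obtain a b a' b' where pq: "p = (a, b)" "q = (a', b')" by (cases p, cases q)
  let ?L = "tensor_map sCC sCC tC tC (mC p) id"
  have idC: "Vector_Spaces.linear sC sC id"
    using vector_space.linear_id[OF is_tensor_vector_spaces(1)[OF tensCC]] .
  have inl: "inl_tensor (tensor_map sAA sAA tA tA (mA a) id u) = ?L (inl_tensor u)" for u
    by (rule tensor_map_commute[OF tensAA tensCC linear_inl mA_linear(2) linear_id(1) linear_mC(2) idC])
      (simp_all add: pq prod_mult_def)
  have inr: "inr_tensor (tensor_map sBB sBB tB tB (mB b) id u) = ?L (inr_tensor u)" for u
    by (rule tensor_map_commute[OF tensBB tensCC linear_inr mB_linear(2) linear_id(2) linear_mC(2) idC])
      (simp_all add: pq prod_mult_def)
  have "prod_coproduct (mC p q) = inl_tensor (tensor_map sAA sAA tA tA (mA a) id (\<Delta>A a'))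
      + inr_tensor (tensor_map sBB sBB tB tB (mB b) id (\<Delta>B b'))"
    by (simp add: pq prod_coproduct_def prod_mult_def normalized_nearly_frobenius_left[OF DeltaA]
        normalized_nearly_frobenius_left[OF DeltaB])
  also have "\<dots> = ?L (prod_coproduct q)"
    by (simp add: pq(2) prod_coproduct_def inl inr
        linear_add[OF linear_tensor_map[OF tensCC tensCC linear_mC(2) idC]])
  finally show ?thesis .
qed

lemma prod_coproduct_counit: "tensor_mult sCC sC tC mC (prod_coproduct p) = p"
proof -
  have "tensor_mult sCC sC tC mC (inl_tensor u) = (tensor_mult sAA sA tA mA u, 0)" for u
    by (rule tensor_mult_tensor_map[OF tensAA tensCC mA_linear linear_mC linear_inl])
      (simp add: prod_mult_def)
  moreover have "tensor_mult sCC sC tC mC (inr_tensor u) = (0, tensor_mult sBB sB tB mB u)" for u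
    by (rule tensor_mult_tensor_map[OF tensBB tensCC mB_linear linear_mC linear_inr])
      (simp add: prod_mult_def)
  ultimately show ?thesis
    by (simp add: prod_coproduct_def linear_add[OF linear_tensor_mult[OF tensCC linear_mC]]
        normalized_nearly_frobenius_counit[OF DeltaA] normalized_nearly_frobenius_counit[OF DeltaB])
qed

lemma normalized_nearly_frobenius_prod_coproduct:
  "normalized_nearly_frobenius sC mC sCC tC prod_coproduct"
  using linear_prod_coproduct prod_coproduct_right prod_coproduct_left prod_coproduct_counit
  unfolding normalized_nearly_frobenius_def nearly_frobenius_def by blast

end

locale tensor_nearly_frobenius = normalized_nearly_frobenius_algebras +
  fixes sD tD mD sDD tDD sP tP
  assumes tensD: "is_tensor sA sB sD tD"
    and mD_linear: "\<And>y. Vector_Spaces.linear sD sD (\<lambda>x. mD x y)" "\<And>x. Vector_Spaces.linear sD sD (mD x)"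
    and mD_tensor: "\<And>a b a' b'. mD (tD a b) (tD a' b') = tD (mA a a') (mB b b')"
    and tensDD: "is_tensor sD sD sDD tDD"
    and tensP: "is_tensor sAA sBB sP tP"
begin

abbreviation "\<tau> \<equiv> tensor_transpose sP sDD tP tA tB tD tDD"

definition tensor_coproduct where
  "tensor_coproduct = \<tau> \<circ> tensor_map sD sP tD tP \<Delta>A \<Delta>B"

lemma linear_transpose: "Vector_Spaces.linear sP sDD \<tau>"
  by (rule linear_tensor_transpose[OF tensAA tensBB tensP tensD tensDD])

lemma linear_tensor_coproduct: "Vector_Spaces.linear sD sDD tensor_coproduct"
  unfolding tensor_coproduct_def
  by (rule Vector_Spaces.linear_compose[OF linear_tensor_map[OF tensD tensP
        normalized_nearly_frobenius_linear[OF DeltaA] normalized_nearly_frobenius_linear[OF DeltaB]]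
        linear_transpose])

lemma tensor_coproduct_tensor: "tensor_coproduct (tD a b) = \<tau> (tP (\<Delta>A a) (\<Delta>B b))"
  by (simp add: tensor_coproduct_def tensor_map_tensor[OF tensD tensP
        normalized_nearly_frobenius_linear[OF DeltaA] normalized_nearly_frobenius_linear[OF DeltaB]])

lemma nearly_frobenius_tensor_coproduct: "nearly_frobenius sD mD sDD tDD tensor_coproduct"
proof (rule nearly_frobenius_if_pure_tensors[OF tensD tensDD mD_linear linear_tensor_coproduct])
  have idD: "Vector_Spaces.linear sD sD id"
    using vector_space.linear_id[OF is_tensor_vector_spaces(3)[OF tensD]] .
  note natural = tensor_transpose_tensor_map[OF tensAA tensBB tensP tensD tensDD]
  fix a b a' b'
  show "tensor_coproduct (mD (tD a b) (tD a' b'))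
    = tensor_map sDD sDD tDD tDD id (\<lambda>z. mD z (tD a' b')) (tensor_coproduct (tD a b))"
    using natural[OF linear_id(1) mA_linear(1) linear_id(2) mB_linear(1) idD mD_linear(1)]
    by (simp add: mD_tensor tensor_coproduct_tensor normalized_nearly_frobenius_right[OF DeltaA]
        normalized_nearly_frobenius_right[OF DeltaB])
  show "tensor_coproduct (mD (tD a b) (tD a' b'))
    = tensor_map sDD sDD tDD tDD (mD (tD a b)) id (tensor_coproduct (tD a' b'))"
    using natural[OF mA_linear(2) linear_id(1) mB_linear(2) linear_id(2) mD_linear(2) idD]
    by (simp add: mD_tensor tensor_coproduct_tensor normalized_nearly_frobenius_left[OF DeltaA]
        normalized_nearly_frobenius_left[OF DeltaB])
qed

lemma tensor_mult_transpose:
  "tensor_mult sDD sD tDD mD (\<tau> (tP u v)) = tD (tensor_mult sAA sA tA mA u) (tensor_mult sBB sB tB mB v)"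
proof (rule bilinear_eq_on_spanning[OF is_tensor_span[OF tensAA] is_tensor_span[OF tensBB],
      where p="\<lambda>u v. tensor_mult sDD sD tDD mD (\<tau> (tP u v))"
      and q="\<lambda>u v. tD (tensor_mult sAA sA tA mA u) (tensor_mult sBB sB tB mB v)"])
  note MD = linear_tensor_mult[OF tensDD mD_linear]
    and MA = linear_tensor_mult[OF tensAA mA_linear] and MB = linear_tensor_mult[OF tensBB mB_linear]
  show "Vector_Spaces.linear sAA sD (\<lambda>u. tensor_mult sDD sD tDD mD (\<tau> (tP u v)))" for v
    by (rule linear_compose_apply[OF linear_compose_apply[OF is_tensor_linear_left[OF tensP]
          linear_transpose] MD])
  show "Vector_Spaces.linear sBB sD (\<lambda>v. tensor_mult sDD sD tDD mD (\<tau> (tP u v)))" for u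
    by (rule linear_compose_apply[OF linear_compose_apply[OF is_tensor_linear_right[OF tensP]
          linear_transpose] MD])
  show "Vector_Spaces.linear sAA sD (\<lambda>u. tD (tensor_mult sAA sA tA mA u) (tensor_mult sBB sB tB mB v))" for v
    by (rule linear_compose_apply[OF MA is_tensor_linear_left[OF tensD]])
  show "Vector_Spaces.linear sBB sD (\<lambda>v. tD (tensor_mult sAA sA tA mA u) (tensor_mult sBB sB tB mB v))" for u
    by (rule linear_compose_apply[OF MB is_tensor_linear_right[OF tensD]])
qed (auto simp: tensor_transpose_tensor[OF tensAA tensBB tensP tensD tensDD] mD_tensor
    tensor_mult_tensor[OF tensDD mD_linear] tensor_mult_tensor[OF tensAA mA_linear]
    tensor_mult_tensor[OF tensBB mB_linear])

lemma tensor_coproduct_counit: "tensor_mult sDD sD tDD mD (tensor_coproduct x) = x"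
proof -
  have "(\<lambda>x. tensor_mult sDD sD tDD mD (tensor_coproduct x)) = (\<lambda>x. x)"
    by (rule linear_eq_on_spanning[OF linear_compose_apply[OF linear_tensor_coproduct
            linear_tensor_mult[OF tensDD mD_linear]]
          vector_space.linear_ident[OF is_tensor_vector_spaces(3)[OF tensD]] is_tensor_span[OF tensD]])
      (auto simp: tensor_coproduct_tensor tensor_mult_transpose
        normalized_nearly_frobenius_counit[OF DeltaA] normalized_nearly_frobenius_counit[OF DeltaB])
  then show ?thesis by (rule fun_cong)
qed

lemma normalized_nearly_frobenius_tensor_coproduct:
  "normalized_nearly_frobenius sD mD sDD tDD tensor_coproduct"
  using nearly_frobenius_tensor_coproduct tensor_coproduct_counit
  by (simp add: normalized_nearly_frobenius_def)

end

theorem proposition17: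
  fixes sA :: "'k::field \<Rightarrow> 'a::ab_group_add \<Rightarrow> 'a" and mA :: "'a \<Rightarrow> 'a \<Rightarrow> 'a" and oneA :: 'a
    and sB :: "'k \<Rightarrow> 'b::ab_group_add \<Rightarrow> 'b" and mB :: "'b \<Rightarrow> 'b \<Rightarrow> 'b" and oneB :: 'b
    and sAA :: "'k \<Rightarrow> 'aa::ab_group_add \<Rightarrow> 'aa" and tA :: "'a \<Rightarrow> 'a \<Rightarrow> 'aa" and \<Delta>A :: "'a \<Rightarrow> 'aa"
    and sBB :: "'k \<Rightarrow> 'bb::ab_group_add \<Rightarrow> 'bb" and tB :: "'b \<Rightarrow> 'b \<Rightarrow> 'bb" and \<Delta>B :: "'b \<Rightarrow> 'bb"
    and sCC :: "'k \<Rightarrow> 'cc::ab_group_add \<Rightarrow> 'cc" and tC :: "'a \<times> 'b \<Rightarrow> 'a \<times> 'b \<Rightarrow> 'cc"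
    and sD :: "'k \<Rightarrow> 'd::ab_group_add \<Rightarrow> 'd" and tD :: "'a \<Rightarrow> 'b \<Rightarrow> 'd"
    and mD :: "'d \<Rightarrow> 'd \<Rightarrow> 'd" and oneD :: 'd
    and sDD :: "'k \<Rightarrow> 'dd::ab_group_add \<Rightarrow> 'dd" and tDD :: "'d \<Rightarrow> 'd \<Rightarrow> 'dd"
    and sP :: "'k \<Rightarrow> 'p::ab_group_add \<Rightarrow> 'p" and tP :: "'aa \<Rightarrow> 'bb \<Rightarrow> 'p"
  assumes algA: "kalg sA mA oneA" and algB: "kalg sB mB oneB"
    and tensAA: "is_tensor sA sA sAA tA" and tensBB: "is_tensor sB sB sBB tB"
    and DeltaA: "normalized_nearly_frobenius sA mA sAA tA \<Delta>A"
    and DeltaB: "normalized_nearly_frobenius sB mB sBB tB \<Delta>B"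
    and tensCC: "is_tensor (prod_scale sA sB) (prod_scale sA sB) sCC tC"
    and tensD: "is_tensor sA sB sD tD"
    and mD_lin: "\<forall>x. Vector_Spaces.linear sD sD (mD x)" "\<forall>y. Vector_Spaces.linear sD sD (\<lambda>x. mD x y)"
    and mD_tensor: "\<forall>a b a' b'. mD (tD a b) (tD a' b') = tD (mA a a') (mB b b')"
    and oneD: "oneD = tD oneA oneB"
    and tensDD: "is_tensor sD sD sDD tDD"
    and tensP: "is_tensor sAA sBB sP tP"
  shows "(\<exists>\<Delta>C. normalized_nearly_frobenius (prod_scale sA sB) (prod_mult mA mB) sCC tC \<Delta>C
            \<and> \<Delta>C (oneA, oneB) =
                tensor_map sAA sCC tA tC (\<lambda>a. (a, 0)) (\<lambda>a. (a, 0)) (\<Delta>A oneA)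
              + tensor_map sBB sCC tB tC (\<lambda>b. (0, b)) (\<lambda>b. (0, b)) (\<Delta>B oneB))
       \<and> normalized_nearly_frobenius sD mD sDD tDD
           (tensor_transpose sP sDD tP tA tB tD tDD \<circ> tensor_map sD sP tD tP \<Delta>A \<Delta>B)"
proof -
  interpret P: product_nearly_frobenius sA mA oneA sB mB oneB sAA tA \<Delta>A sBB tB \<Delta>B sCC tC
    by unfold_locales (fact algA algB tensAA tensBB DeltaA DeltaB tensCC)+
  interpret T: tensor_nearly_frobenius sA mA oneA sB mB oneB sAA tA \<Delta>A sBB tB \<Delta>B sD tD mD sDD tDD sP tP
    using mD_lin mD_tensor tensD tensDD tensP
    by (intro tensor_nearly_frobenius.intro P.normalized_nearly_frobenius_algebras_axioms
        tensor_nearly_frobenius_axioms.intro) blast+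
  have "P.prod_coproduct (oneA, oneB) =
      tensor_map sAA sCC tA tC (\<lambda>a. (a, 0)) (\<lambda>a. (a, 0)) (\<Delta>A oneA)
    + tensor_map sBB sCC tB tC (\<lambda>b. (0, b)) (\<lambda>b. (0, b)) (\<Delta>B oneB)"
    by (simp add: P.prod_coproduct_def)
  then show ?thesis
    using P.normalized_nearly_frobenius_prod_coproduct T.normalized_nearly_frobenius_tensor_coproduct
    unfolding T.tensor_coproduct_def by blast
qed

end
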